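(* Let $X^{(n)}=\{X_1,\dots,X_n\}\subset\mathbb{R}^d$ and $u^{(n)}=\{u_1,\dots,u_n\}\subset\mathbb{R}^d$, and let $\hat T$ be a solution of the discrete optimal transport problem from $u^{(n)}$ to $X^{(n)}$. Then for every $i$, $$\mathrm{BP}(\hat T(u_i))\in[\mathrm{TD}^-(u_i;u^{(n)}),\ \mathrm{TD}(u_i;u^{(n)})].$$
   Context: An empirical optimal transport map $\hat T_{Z^{(n)}}$ from $u^{(n)}$ to a set $Z^{(n)}$ of $n$ points is any bijection $T:u^{(n)}\to Z^{(n)}$ minimizing $\frac1n\sum_{i=1}^n\|T(u_i)-u_i\|^2$; $\hat T=\hat T_{X^{(n)}}$. $\mathcal{Q}_{\ell,n}$ is the set of all sets $Z^{(n)}$ of $n$ points of $\mathbb{R}^d$ sharing exactly $n-\ell$ elements with $X^{(n)}$, and $\mathrm{BP}(\hat T(u_i))=\frac1n\min\{\ell\in\{1,\dots,n\}:\sup_{Z^{(n)}\in\mathcal{Q}_{\ell,n}}\|\hat T(u_i)-\hat T_{Z^{(n)}}(u_i)\|=\infty\}$. Tukey depth: $\mathrm{TD}(u;u^{(n)})=\min_{v\in\mathcal{S}^{d-1}}\frac1n\sum_{j}\mathbf{1}(\langle v,u_j-u\rangle\geq0)$. Lower Tukey depth: $\mathrm{TD}^-(u;u^{(n)})=\frac{n+1}{n}-\max_{v\in\mathcal{S}^{d-1}}\frac1n\sum_j\mathbf{1}(\langle v,u_j-u\rangle\geq0)$. *)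

theory Defs
  imports "HOL-Analysis.Analysis"
begin

definition ot_cost :: "'a::euclidean_space set \<Rightarrow> ('a \<Rightarrow> 'a) \<Rightarrow> real" where
  "ot_cost U T = (1 / real (card U)) * (\<Sum>u\<in>U. (norm (T u - u))\<^sup>2)"

definition is_ot_map :: "'a::euclidean_space set \<Rightarrow> 'a set \<Rightarrow> ('a \<Rightarrow> 'a) \<Rightarrow> bool" where
  "is_ot_map U Z T \<longleftrightarrow> bij_betw T U Z \<and>
     (\<forall>T'. bij_betw T' U Z \<longrightarrow> ot_cost U T \<le> ot_cost U T')"

definition Qset :: "nat \<Rightarrow> 'a set \<Rightarrow> 'a set set" where
  "Qset l X = {Z. finite Z \<and> card Z = card X \<and> card (Z \<inter> X) = card X - l}"

text \<open>The supremum is taken over all contaminated sets Z and all optimal maps for Z;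
  "sup = infinity" means the set of distances is unbounded.\<close>
definition BP :: "'a::euclidean_space set \<Rightarrow> 'a set \<Rightarrow> ('a \<Rightarrow> 'a) \<Rightarrow> 'a \<Rightarrow> real" where
  "BP U X That u = (1 / real (card U)) *
     real (LEAST l. 1 \<le> l \<and> l \<le> card U \<and>
        \<not> (\<exists>B. \<forall>Z T. Z \<in> Qset l X \<and> is_ot_map U Z T \<longrightarrow> norm (That u - T u) \<le> B))"

definition tukey_depth :: "'a::euclidean_space \<Rightarrow> 'a set \<Rightarrow> real" where
  "tukey_depth u U = Min ((\<lambda>v. (1 / real (card U)) * real (card {w\<in>U. inner v (w - u) \<ge> 0}))
                          ` {v. norm v = 1})"

definition lower_tukey_depth :: "'a::euclidean_space \<Rightarrow> 'a set \<Rightarrow> real" where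
  "lower_tukey_depth u U = (real (card U) + 1) / real (card U) -
     Max ((\<lambda>v. (1 / real (card U)) * real (card {w\<in>U. inner v (w - u) \<ge> 0})) ` {v. norm v = 1})"

end

theory Submission
  imports Defs
begin

text \<open>An optimal assignment T is monotone: swapping the targets of two points a, b cannot lower
  the cost, which gives \<open>\<langle>T a - T b, a - b\<rangle> \<ge> 0\<close>.
  Upper bound: if the closed halfspace \<open>{w. \<langle>v, w - u\<rangle> \<ge> 0}\<close> contains k sample points, replace
  k data points by points arbitrarily far out along v. By pigeonhole some sample point outside
  the halfspace is sent to one of them, and monotonicity against that point forces T u itself
  far out along v.
  Lower bound: if l plus the largest halfspace count is at most n, then the n - l sample points
  still sent to uncontaminated data surround u, i.e. every direction sees one of them at positive
  height; by compactness of the sphere this height is uniformly positive, and monotonicity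
  against those points bounds T u.\<close>

definition halfspace_count :: "'a::euclidean_space \<Rightarrow> 'a set \<Rightarrow> 'a \<Rightarrow> nat" where
  "halfspace_count u U v = card {w\<in>U. inner v (w - u) \<ge> 0}"

definition contaminated_ot_values :: "'a::euclidean_space set \<Rightarrow> 'a set \<Rightarrow> nat \<Rightarrow> 'a \<Rightarrow> 'a set" where
  "contaminated_ot_values U X l u = {T u |Z T. Z \<in> Qset l X \<and> is_ot_map U Z T}"

lemma ot_map_exists:
  fixes U Z :: "'a::euclidean_space set"
  assumes "finite U" "finite Z" "card U = card Z"
  shows "\<exists>T. is_ot_map U Z T"
proof -
  define B where "B = {T \<in> U \<rightarrow>\<^sub>E Z. bij_betw T U Z}"
  have "finite B"
    using assms by (intro finite_subset[of B "U \<rightarrow>\<^sub>E Z"]) (auto simp: B_def finite_PiE)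
  have restrict_in_B: "restrict T U \<in> B" if "bij_betw T U Z" for T
    using that unfolding B_def by (auto dest: bij_betwE)
  have cost_restrict: "ot_cost U (restrict T U) = ot_cost U T" for T
    unfolding ot_cost_def by (simp cong: sum.cong)
  obtain h where "bij_betw h U Z"
    using finite_same_card_bij assms by blast
  then have "B \<noteq> {}"
    using restrict_in_B by blast
  then have "Min (ot_cost U ` B) \<in> ot_cost U ` B"
    using \<open>finite B\<close> by (intro Min_in) auto
  then obtain T where T: "T \<in> B" "ot_cost U T = Min (ot_cost U ` B)"
    by auto
  have "ot_cost U T \<le> ot_cost U T'" if "bij_betw T' U Z" for T'
  proof -
    have "Min (ot_cost U ` B) \<le> ot_cost U (restrict T' U)"
      using \<open>finite B\<close> restrict_in_B[OF that] by simp
    then show ?thesis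
      by (simp add: T(2) cost_restrict)
  qed
  moreover have "bij_betw T U Z"
    using T(1) unfolding B_def by blast
  ultimately show ?thesis
    unfolding is_ot_map_def by blast
qed

lemma ot_map_monotone:
  fixes T :: "'a::euclidean_space \<Rightarrow> 'a"
  assumes "is_ot_map U Z T" "finite U" "a \<in> U" "b \<in> U"
  shows "0 \<le> inner (T a - T b) (a - b)"
proof (cases "a = b")
  case False
  define T' where "T' = T \<circ> Transposition.transpose a b"
  define cost where "cost S w = (norm (S w - w))\<^sup>2" for S :: "'a \<Rightarrow> 'a" and w
  have "bij_betw T U Z"
    using assms(1) unfolding is_ot_map_def by blast
  then have "bij_betw T' U Z"
    unfolding T'_def using assms(3,4) by (intro bij_betw_trans) (simp_all add: bij_betw_transpose_iff)
  then have "ot_cost U T \<le> ot_cost U T'"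
    using assms(1) unfolding is_ot_map_def by blast
  moreover have "card U > 0"
    using assms(2,3) card_gt_0_iff by blast
  ultimately have "0 \<le> (\<Sum>w\<in>U. cost T' w) - (\<Sum>w\<in>U. cost T w)"
    unfolding ot_cost_def cost_def by (simp add: field_simps)
  also have "\<dots> = (\<Sum>w\<in>U. cost T' w - cost T w)"
    by (simp add: sum_subtractf)
  also have "\<dots> = (\<Sum>w\<in>{a, b}. cost T' w - cost T w)"
    using assms(2-4) by (intro sum.mono_neutral_right) (auto simp: T'_def cost_def)
  also have "\<dots> = (norm (T b - a))\<^sup>2 - (norm (T a - a))\<^sup>2 + ((norm (T a - b))\<^sup>2 - (norm (T b - b))\<^sup>2)"
    using False by (simp add: T'_def cost_def)
  also have "\<dots> = 2 * inner (T a - T b) (a - b)"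
    unfolding power2_norm_eq_inner by (simp add: inner_diff_left inner_diff_right inner_commute)
  finally show ?thesis
    by simp
qed simp

lemma halfspace_count_pos:
  assumes "finite U" "u \<in> U"
  shows "0 < halfspace_count u U v"
  unfolding halfspace_count_def using assms by (subst card_gt_0_iff) auto

lemma halfspace_count_le_card:
  "finite U \<Longrightarrow> halfspace_count u U v \<le> card U"
  unfolding halfspace_count_def by (intro card_mono) auto

lemma finite_halfspace_counts:
  assumes "finite U"
  shows "finite (halfspace_count u U ` A)"
proof (rule finite_subset)
  show "halfspace_count u U ` A \<subseteq> {..card U}"
    using halfspace_count_le_card[OF assms] by auto
qed simp

lemma sphere_halfspace_fractions:
  "(\<lambda>v. (1 / real (card U)) * real (card {w\<in>U. inner v (w - u) \<ge> 0})) ` {v. norm v = 1}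
     = (\<lambda>m. real m / real (card U)) ` halfspace_count u U ` sphere 0 1"
proof -
  have "{v. norm v = 1} = sphere (0::'a) 1"
    by auto
  then show ?thesis
    unfolding image_image halfspace_count_def by simp
qed

lemma mono_divide_card: "mono (\<lambda>m::nat. real m / real (card U))"
  by (rule monoI) (simp add: divide_right_mono)

lemma tukey_depth_eq_Min:
  assumes "finite U"
  shows "tukey_depth u U = real (Min (halfspace_count u U ` sphere 0 1)) / real (card U)"
  unfolding tukey_depth_def sphere_halfspace_fractions
  using assms finite_halfspace_counts
  by (intro mono_Min_commute[symmetric] mono_divide_card) auto

lemma lower_tukey_depth_eq_Max:
  assumes "finite U"
  shows "lower_tukey_depth u U
           = (real (card U) + 1 - real (Max (halfspace_count u U ` sphere 0 1))) / real (card U)"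
  unfolding lower_tukey_depth_def sphere_halfspace_fractions diff_divide_distrib
  using assms finite_halfspace_counts
  by (subst mono_Max_commute[symmetric, OF mono_divide_card]) auto

lemma continuous_on_Max_family:
  fixes g :: "'b \<Rightarrow> 'a::topological_space \<Rightarrow> real"
  assumes "finite K" "K \<noteq> {}" "\<And>w. w \<in> K \<Longrightarrow> continuous_on S (g w)"
  shows "continuous_on S (\<lambda>v. Max ((\<lambda>w. g w v) ` K))"
  using assms
proof (induction K rule: finite_ne_induct)
  case (insert x F)
  have "continuous_on S (\<lambda>v. max (g x v) (Max ((\<lambda>w. g w v) ` F)))"
    using insert by (intro continuous_on_max) auto
  then show ?case
    using insert by simp
qed simp

lemma uniform_margin_on_sphere:
  fixes u :: "'a::euclidean_space"
  assumes "finite K" and positive: "\<And>v. v \<in> sphere 0 1 \<Longrightarrow> \<exists>w\<in>K. 0 < inner v (w - u)"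
  shows "\<exists>e>0. \<forall>v\<in>sphere 0 1. \<exists>w\<in>K. e \<le> inner v (w - u)"
proof -
  define f where "f v = Max ((\<lambda>w. inner v (w - u)) ` K)" for v
  obtain v0 :: 'a where "v0 \<in> sphere 0 1"
    using vector_choose_size[of 1] by auto
  then have "K \<noteq> {}" "sphere (0::'a) 1 \<noteq> {}"
    using positive by auto
  have f_attained: "\<exists>w\<in>K. inner v (w - u) = f v" for v
  proof -
    have "f v \<in> (\<lambda>w. inner v (w - u)) ` K"
      unfolding f_def using \<open>finite K\<close> \<open>K \<noteq> {}\<close> by (intro Max_in) auto
    then show ?thesis
      by auto
  qed
  have "continuous_on (sphere 0 1) f"
    unfolding f_def using \<open>finite K\<close> \<open>K \<noteq> {}\<close>
    by (intro continuous_on_Max_family) (auto intro!: continuous_intros)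
  then obtain x where x: "x \<in> sphere 0 1" "\<And>v. v \<in> sphere 0 1 \<Longrightarrow> f x \<le> f v"
    using continuous_attains_inf[OF compact_sphere \<open>sphere 0 1 \<noteq> {}\<close>] by blast
  obtain w where "w \<in> K" "0 < inner x (w - u)"
    using positive[OF x(1)] by blast
  then have "0 < f x"
    unfolding f_def using \<open>finite K\<close> by (auto intro: less_le_trans)
  then show ?thesis
    using x(2) f_attained by (metis order.trans order.refl)
qed

lemma exists_point_in_open_halfspace:
  assumes "finite U" "u \<in> U" "K \<subseteq> U" "u \<notin> K"
    and counts: "\<And>v. v \<in> sphere 0 1 \<Longrightarrow> halfspace_count u U v \<le> card K"
    and "v \<in> sphere 0 1"
  shows "\<exists>w\<in>K. 0 < inner v (w - u)"
proof (rule ccontr)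
  assume "\<not> ?thesis"
  then have "insert u K \<subseteq> {w\<in>U. inner (- v) (w - u) \<ge> 0}"
    using assms(2,3) by (auto simp: not_less)
  then have "card (insert u K) \<le> halfspace_count u U (- v)"
    unfolding halfspace_count_def using assms(1) by (intro card_mono) auto
  also have "\<dots> \<le> card K"
    using counts assms(6) by simp
  finally show False
    using assms(1,3,4) finite_subset by fastforce
qed

definition breakdown_level :: "'a::euclidean_space set \<Rightarrow> 'a set \<Rightarrow> 'a \<Rightarrow> nat" where
  "breakdown_level U X u =
     (LEAST l. 1 \<le> l \<and> l \<le> card U \<and> \<not> bounded (contaminated_ot_values U X l u))"

lemma BP_eq_breakdown_level:
  "BP U X That u = real (breakdown_level U X u) / real (card U)"
proof -
  have "(\<exists>B. \<forall>Z T. Z \<in> Qset l X \<and> is_ot_map U Z T \<longrightarrow> norm (That u - T u) \<le> B)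
          \<longleftrightarrow> bounded (contaminated_ot_values U X l u)" for l
    unfolding contaminated_ot_values_def bounded_any_center[where a = "That u"] dist_norm by blast
  then show ?thesis
    unfolding BP_def breakdown_level_def by simp
qed

lemma Qset_replacing_subset:
  assumes "finite X" "finite P" "P \<inter> X = {}" "card P \<le> card X"
  shows "\<exists>Z\<in>Qset (card P) X. P \<subseteq> Z \<and> Z - P \<subseteq> X"
proof -
  obtain R where R: "R \<subseteq> X" "card R = card P"
    using obtain_subset_with_card_n assms(4) by metis
  define Z where "Z = (X - R) \<union> P"
  have "card (X - R) = card X - card P"
    using R assms(1) by (simp add: card_Diff_subset finite_subset)
  moreover have "Z \<inter> X = X - R"
    unfolding Z_def using assms(3) by blast
  moreover have "card Z = card (X - R) + card P"
    unfolding Z_def using assms by (intro card_Un_disjoint) auto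
  ultimately have "Z \<in> Qset (card P) X"
    unfolding Qset_def Z_def using assms by auto
  then show ?thesis
    unfolding Z_def by blast
qed

lemma preimage_leaves_subset:
  assumes "finite U" "S \<subseteq> U" "u \<in> S" "f u \<notin> P" "P \<subseteq> f ` U" "card S \<le> card P"
  shows "\<exists>w\<in>U - S. f w \<in> P"
proof (rule ccontr)
  assume "\<not> ?thesis"
  then have "P \<subseteq> f ` (S - {u})"
    using assms(4,5) by fastforce
  moreover have "finite S"
    using assms(1,2) finite_subset by blast
  ultimately have "card P \<le> card (S - {u})"
    by (meson card_image_le card_mono finite_Diff finite_imageI order_trans)
  also have "\<dots> < card S"
    using \<open>finite S\<close> assms(3) by (rule card_Diff1_less)
  finally show False
    using assms(6) by simp
qed

lemma ot_map_value_in_far_set: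
  assumes T: "is_ot_map U Z T" and "finite U" "u \<in> U"
    and "P \<subseteq> Z" "halfspace_count u U v \<le> card P"
    and near: "\<And>z. z \<in> Z - P \<Longrightarrow> norm z \<le> M"
    and far: "\<And>p w. p \<in> P \<Longrightarrow> w \<in> U \<Longrightarrow> inner v (w - u) < 0 \<Longrightarrow> M * norm (w - u) < inner p (u - w)"
  shows "T u \<in> P"
proof (rule ccontr)
  assume "T u \<notin> P"
  have "bij_betw T U Z"
    using T unfolding is_ot_map_def by blast
  then have "norm (T u) \<le> M"
    using near \<open>T u \<notin> P\<close> assms(3) bij_betwE by blast
  have "\<exists>w\<in>U - {w\<in>U. inner v (w - u) \<ge> 0}. T w \<in> P"
    using assms(2-5) \<open>T u \<notin> P\<close> \<open>bij_betw T U Z\<close>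
    by (intro preimage_leaves_subset) (auto simp: halfspace_count_def bij_betw_def)
  then obtain w where w: "w \<in> U" "\<not> inner v (w - u) \<ge> 0" "T w \<in> P"
    by blast
  have "inner (T w) (u - w) \<le> inner (T u) (u - w)"
    using ot_map_monotone[OF T assms(2) w(1) assms(3)]
    by (simp add: inner_diff_left inner_diff_right)
  also have "\<dots> \<le> norm (T u) * norm (w - u)"
    using norm_cauchy_schwarz by (simp add: norm_minus_commute)
  also have "\<dots> \<le> M * norm (w - u)"
    using \<open>norm (T u) \<le> M\<close> by (simp add: mult_right_mono)
  finally show False
    using far[OF w(3,1)] w(2) by simp
qed

lemma finite_subset_of_ray:
  fixes v :: "'a::real_normed_vector"
  assumes "v \<noteq> 0"
  shows "\<exists>P. finite P \<and> card P = k \<and> (\<forall>p\<in>P. \<exists>s\<ge>t. p = s *\<^sub>R v)"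
proof -
  define P where "P = (\<lambda>j. (t + real j) *\<^sub>R v) ` {..<k}"
  have "finite P"
    unfolding P_def by simp
  moreover have "card P = k"
    unfolding P_def using assms by (subst card_image) (auto simp: inj_on_def)
  moreover have "\<exists>s\<ge>t. p = s *\<^sub>R v" if "p \<in> P" for p
  proof -
    obtain j :: nat where "p = (t + real j) *\<^sub>R v"
      using \<open>p \<in> P\<close> unfolding P_def by blast
    then show ?thesis
      by (intro exI[of _ "t + real j"]) simp
  qed
  ultimately show ?thesis
    by blast
qed

lemma eventually_beyond_halfspace_ratios:
  assumes "finite U"
  shows "\<forall>\<^sub>F s in at_top. \<forall>w\<in>U. inner v (w - u) < 0 \<longrightarrow> M * norm (w - u) < s * - inner v (w - u)"
  using assms
proof (intro eventually_ball_finite ballI)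
  fix w
  show "\<forall>\<^sub>F s in at_top. inner v (w - u) < 0 \<longrightarrow> M * norm (w - u) < s * - inner v (w - u)"
  proof (cases "inner v (w - u) < 0")
    case True
    have "\<forall>\<^sub>F s in at_top. M * norm (w - u) / - inner v (w - u) < s"
      by (rule eventually_gt_at_top)
    then show ?thesis
      by eventually_elim (metis True neg_0_less_iff_less pos_divide_less_eq)
  qed simp
qed

lemma far_contamination_moves_ot_value:
  fixes U X :: "'a::euclidean_space set"
  assumes "finite U" "finite X" "card X = card U" "u \<in> U" "v \<in> sphere 0 1"
    and M: "\<And>x. x \<in> X \<Longrightarrow> norm x \<le> M" and "M < t"
    and far: "\<And>s w. t \<le> s \<Longrightarrow> w \<in> U \<Longrightarrow> inner v (w - u) < 0 \<Longrightarrow> M * norm (w - u) < s * - inner v (w - u)"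
  shows "\<exists>y\<in>contaminated_ot_values U X (halfspace_count u U v) u. t \<le> norm y"
proof -
  define k where "k = halfspace_count u U v"
  have "v \<noteq> 0"
    using assms(5) by auto
  then obtain P where P: "finite P" "card P = k" and ray: "\<forall>p\<in>P. \<exists>s\<ge>t. p = s *\<^sub>R v"
    using finite_subset_of_ray by blast
  have norm_ray: "t \<le> norm p" if "p \<in> P" for p
    using ray that assms(5) by auto
  have disjoint: "P \<inter> X = {}"
    using norm_ray M \<open>M < t\<close> by fastforce
  have "card P \<le> card X"
    using halfspace_count_le_card[OF assms(1)] assms(3) unfolding P(2) k_def by simp
  then obtain Z where Z: "Z \<in> Qset k X" "P \<subseteq> Z" "Z - P \<subseteq> X"
    using Qset_replacing_subset[OF assms(2) P(1) disjoint] unfolding P(2) by blast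
  then have "finite Z" "card U = card Z"
    using assms(3) unfolding Qset_def by auto
  then obtain T where T: "is_ot_map U Z T"
    using ot_map_exists[OF assms(1)] by blast
  have "T u \<in> P"
  proof (rule ot_map_value_in_far_set[OF T assms(1,4) Z(2)])
    show "halfspace_count u U v \<le> card P"
      unfolding k_def P(2) ..
    show "norm z \<le> M" if "z \<in> Z - P" for z
      using M Z(3) that by blast
    show "M * norm (w - u) < inner p (u - w)"
      if p: "p \<in> P" and w: "w \<in> U" "inner v (w - u) < 0" for p w
    proof -
      obtain s where s: "t \<le> s" "p = s *\<^sub>R v"
        using ray p by blast
      then show ?thesis
        using far[OF s(1) w] by (simp add: inner_diff_right algebra_simps)
    qed
  qed
  moreover have "T u \<in> contaminated_ot_values U X k u"
    unfolding contaminated_ot_values_def using Z(1) T by blast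
  ultimately show ?thesis
    unfolding k_def using norm_ray by blast
qed

lemma contaminated_ot_values_unbounded:
  fixes U X :: "'a::euclidean_space set"
  assumes "finite U" "finite X" "card X = card U" "u \<in> U" "v \<in> sphere 0 1"
  shows "\<not> bounded (contaminated_ot_values U X (halfspace_count u U v) u)"
proof
  assume "bounded (contaminated_ot_values U X (halfspace_count u U v) u)"
  then obtain a where a: "\<And>y. y \<in> contaminated_ot_values U X (halfspace_count u U v) u \<Longrightarrow> norm y \<le> a"
    unfolding bounded_iff by blast
  obtain M where M: "\<And>x. x \<in> X \<Longrightarrow> norm x \<le> M"
    using finite_imp_bounded[OF assms(2)] unfolding bounded_iff by blast
  have "\<forall>\<^sub>F s in at_top. (\<forall>w\<in>U. inner v (w - u) < 0 \<longrightarrow> M * norm (w - u) < s * - inner v (w - u))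
          \<and> max a M < s"
    using eventually_beyond_halfspace_ratios[OF assms(1)] by (intro eventually_conj eventually_gt_at_top)
  then obtain t where t: "\<And>s. t \<le> s \<Longrightarrow> (\<forall>w\<in>U. inner v (w - u) < 0 \<longrightarrow> M * norm (w - u) < s * - inner v (w - u))
          \<and> max a M < s"
    unfolding eventually_at_top_linorder by blast
  obtain y where "y \<in> contaminated_ot_values U X (halfspace_count u U v) u" "t \<le> norm y"
    using far_contamination_moves_ot_value[OF assms M, of t] t by auto
  then show False
    using a t[of t] by fastforce
qed

lemma ot_map_value_bounded_by_margin:
  assumes T: "is_ot_map U Z T" and "finite U" "u \<in> U" "K \<subseteq> U" "0 < e"
    and margin: "\<And>v. v \<in> sphere 0 1 \<Longrightarrow> \<exists>w\<in>K. e \<le> inner v (w - u)"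
    and bound: "\<And>w. w \<in> K \<Longrightarrow> norm (T w) * norm (w - u) \<le> C"
  shows "norm (T u) \<le> C / e"
proof (cases "T u = 0")
  case True
  obtain v0 :: 'a where "v0 \<in> sphere 0 1"
    using vector_choose_size[of 1] by auto
  then obtain w where "w \<in> K"
    using margin by blast
  then have "0 \<le> C"
    using bound by (meson mult_nonneg_nonneg norm_ge_zero order_trans)
  then show ?thesis
    using True \<open>0 < e\<close> by simp
next
  case False
  obtain w where w: "w \<in> K" "e \<le> inner (sgn (T u)) (w - u)"
    using margin[of "sgn (T u)"] False by (auto simp: norm_sgn)
  have "norm (T u) * e \<le> norm (T u) * inner (sgn (T u)) (w - u)"
    using w(2) by (simp add: mult_left_mono)
  also have "\<dots> = inner (T u) (w - u)"
    using False by (simp add: sgn_div_norm)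
  also have "\<dots> \<le> inner (T w) (w - u)"
    using ot_map_monotone[OF T assms(2,3)] w(1) assms(4)
    by (force simp: inner_diff_left inner_diff_right)
  also have "\<dots> \<le> norm (T w) * norm (w - u)"
    by (rule norm_cauchy_schwarz)
  also have "\<dots> \<le> C"
    using bound w(1) .
  finally show ?thesis
    using \<open>0 < e\<close> by (simp add: pos_le_divide_eq)
qed

lemma ot_values_bounded_if_surrounding:
  fixes U X :: "'a::euclidean_space set"
  assumes "finite U" "finite X" "u \<in> U" "K \<subseteq> U"
    and positive: "\<And>v. v \<in> sphere 0 1 \<Longrightarrow> \<exists>w\<in>K. 0 < inner v (w - u)"
  shows "bounded {T u |Z T. is_ot_map U Z T \<and> T ` K \<subseteq> X}"
proof -
  have "finite K"
    using assms(1,4) finite_subset by blast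
  then obtain e where "0 < e" and e: "\<And>v. v \<in> sphere 0 1 \<Longrightarrow> \<exists>w\<in>K. e \<le> inner v (w - u)"
    using uniform_margin_on_sphere[OF _ positive] by blast
  obtain M where "0 < M" and M: "\<And>x. x \<in> X \<Longrightarrow> norm x \<le> M"
    using finite_imp_bounded[OF assms(2)] unfolding bounded_pos by blast
  obtain D where "0 < D" and D: "\<And>w. w \<in> U \<Longrightarrow> norm (w - u) \<le> D"
    using finite_imp_bounded[of "(\<lambda>w. w - u) ` U"] assms(1) unfolding bounded_pos by auto
  have "norm (T u) \<le> M * D / e" if T: "is_ot_map U Z T" "T ` K \<subseteq> X" for Z T
  proof (rule ot_map_value_bounded_by_margin[OF T(1) assms(1,3,4) \<open>0 < e\<close> e])
    show "norm (T w) * norm (w - u) \<le> M * D" if "w \<in> K" for w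
      using M D T(2) assms(4) that \<open>0 < M\<close> by (intro mult_mono) auto
  qed
  then show ?thesis
    unfolding bounded_iff by blast
qed

lemma contaminated_ot_values_cover:
  assumes "card X = card U"
  shows "contaminated_ot_values U X l u \<subseteq>
           X \<union> (\<Union>K\<in>{K. K \<subseteq> U \<and> u \<notin> K \<and> card K = card U - l}. {T u |Z T. is_ot_map U Z T \<and> T ` K \<subseteq> X})"
proof
  fix y
  assume "y \<in> contaminated_ot_values U X l u"
  then obtain Z T where Z: "Z \<in> Qset l X" and T: "is_ot_map U Z T" and y: "y = T u"
    unfolding contaminated_ot_values_def by blast
  show "y \<in> X \<union> (\<Union>K\<in>{K. K \<subseteq> U \<and> u \<notin> K \<and> card K = card U - l}. {T u |Z T. is_ot_map U Z T \<and> T ` K \<subseteq> X})"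
  proof (cases "T u \<in> X")
    case False
    define K where "K = {w\<in>U. T w \<in> X}"
    have "bij_betw T U Z"
      using T unfolding is_ot_map_def by blast
    then have "bij_betw T K (Z \<inter> X)"
      unfolding K_def bij_betw_def inj_on_def by auto
    then have "card K = card U - l"
      using Z assms unfolding Qset_def by (simp add: bij_betw_same_card)
    then have "K \<in> {K. K \<subseteq> U \<and> u \<notin> K \<and> card K = card U - l}"
      unfolding K_def using False by auto
    moreover have "y \<in> {T u |Z T. is_ot_map U Z T \<and> T ` K \<subseteq> X}"
      unfolding y K_def using T by blast
    ultimately show ?thesis
      by blast
  qed (use y in simp)
qed

lemma contaminated_ot_values_bounded:
  fixes U X :: "'a::euclidean_space set"
  assumes "finite U" "finite X" "card X = card U" "u \<in> U" "l + m \<le> card U"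
    and counts: "\<And>v. v \<in> sphere 0 1 \<Longrightarrow> halfspace_count u U v \<le> m"
  shows "bounded (contaminated_ot_values U X l u)"
proof -
  define Fam where "Fam = {K. K \<subseteq> U \<and> u \<notin> K \<and> card K = card U - l}"
  have "bounded {T u |Z T. is_ot_map U Z T \<and> T ` K \<subseteq> X}" if "K \<in> Fam" for K
  proof (rule ot_values_bounded_if_surrounding[OF assms(1,2,4)])
    have K: "K \<subseteq> U" "u \<notin> K" "m \<le> card K"
      using that assms(5) unfolding Fam_def by auto
    then show "K \<subseteq> U"
      by simp
    have "halfspace_count u U v \<le> card K" if "v \<in> sphere 0 1" for v
      using counts[OF that] K(3) by linarith
    then show "\<exists>w\<in>K. 0 < inner v (w - u)" if "v \<in> sphere 0 1" for v
      using exists_point_in_open_halfspace[OF assms(1,4) K(1,2)] that by blast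
  qed
  moreover have "finite Fam"
    using assms(1) by (intro finite_subset[of Fam "Pow U"]) (auto simp: Fam_def)
  ultimately have "bounded (X \<union> (\<Union>K\<in>Fam. {T u |Z T. is_ot_map U Z T \<and> T ` K \<subseteq> X}))"
    using assms(2) by (simp add: bounded_Un bounded_UN finite_imp_bounded)
  then show ?thesis
    using contaminated_ot_values_cover[OF assms(3)] unfolding Fam_def by (rule bounded_subset)
qed

lemma breakdown_level_bounds:
  fixes U X :: "'a::euclidean_space set"
  assumes "finite U" "finite X" "card X = card U" "u \<in> U"
  defines "C \<equiv> halfspace_count u U ` sphere 0 1"
  shows "breakdown_level U X u \<le> Min C" and "card U < breakdown_level U X u + Max C"
proof -
  define breaks where "breaks l \<longleftrightarrow> 1 \<le> l \<and> l \<le> card U \<and> \<not> bounded (contaminated_ot_values U X l u)" for l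
  have "finite C" "C \<noteq> {}"
    unfolding C_def using finite_halfspace_counts[OF assms(1)] by auto
  then have "Min C \<in> C"
    by (rule Min_in)
  then obtain v where v: "v \<in> sphere 0 1" "Min C = halfspace_count u U v"
    unfolding C_def by auto
  then have "breaks (Min C)"
    unfolding breaks_def using halfspace_count_pos[OF assms(1,4)] halfspace_count_le_card[OF assms(1)]
      contaminated_ot_values_unbounded[OF assms(1-4) v(1)] by (simp add: Suc_le_eq)
  then show "breakdown_level U X u \<le> Min C"
    unfolding breakdown_level_def breaks_def[symmetric] by (rule Least_le)
  have "breaks (breakdown_level U X u)"
    unfolding breakdown_level_def breaks_def[symmetric] using \<open>breaks (Min C)\<close> by (rule LeastI)
  then show "card U < breakdown_level U X u + Max C"
    using contaminated_ot_values_bounded[OF assms(1-4), of "breakdown_level U X u" "Max C"] \<open>finite C\<close>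
    unfolding breaks_def C_def by (meson Max_ge imageI not_less)
qed

theorem mainTheorem3:
  fixes U X :: "'a::euclidean_space set" and That :: "'a \<Rightarrow> 'a" and u :: 'a
  assumes "finite U" and "finite X" and "card X = card U"
    and "is_ot_map U X That"
    and "u \<in> U"
  shows "lower_tukey_depth u U \<le> BP U X That u \<and> BP U X That u \<le> tukey_depth u U"
proof -
  define n where "n = card U"
  define L where "L = breakdown_level U X u"
  define C where "C = halfspace_count u U ` sphere 0 1"
  have "real n + 1 - real (Max C) \<le> real L" "real L \<le> real (Min C)"
    using breakdown_level_bounds[OF assms(1,2,3,5)] unfolding n_def L_def C_def by linarith+
  then have "(real n + 1 - real (Max C)) / real n \<le> real L / real n"
    and "real L / real n \<le> real (Min C) / real n"
    by (intro divide_right_mono; simp)+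
  then show ?thesis
    unfolding BP_eq_breakdown_level tukey_depth_eq_Min[OF assms(1)] lower_tukey_depth_eq_Max[OF assms(1)]
      n_def[symmetric] L_def[symmetric] C_def[symmetric]
    by blast
qed

end
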